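(* Let $q=2^t$. The space $\ker\pi_{P_1}\cap C(P,L_1)$ has dimension $q-1$. More precisely, fix a line $\ell\neq\ell_0$ through $p_0$; then the $q-1$ functions $\chi_\ell-\chi_{\ell'}$, where $\ell'$ ranges over the lines through $p_0$ different from $\ell_0$ and $\ell$, form a basis of $\ker\pi_{P_1}\cap C(P,L_1)$.
   Context: Let $q$ be a prime power and $V$ a $4$-dimensional vector space over $\mathbb{F}_q$ with a nonsingular alternating bilinear form and symplectic basis $e_0,e_1,e_2,e_3$ with $(e_0,e_3)=(e_1,e_2)=1$. $P$ is the set of $1$-dimensional subspaces of $V$ (points), $L$ the set of totally isotropic $2$-dimensional subspaces (lines). $p_0=\langle e_0\rangle$, $\ell_0=\langle e_0,e_1\rangle$; $P_1$ is the set of points $(a:b:c:d)$ with $d\ne0$; $L_1$ is the set of lines sharing no point with $\ell_0$. $\mathbb{F}_2[P]$ is the space of functions $P\to\mathbb{F}_2$, $\chi_\ell$ is the characteristic function of the point set of a line $\ell$, and $C(P,L_1)$ is the $\mathbb{F}_2$-span of $\{\chi_\ell:\ell\in L_1\}$. $\pi_{P_1}:\mathbb{F}_2[P]\to\mathbb{F}_2[P_1]$ is restriction of functions to $P_1$. *)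

theory Defs
  imports "HOL-Analysis.Analysis" "HOL-Library.Z2" "HOL-Library.Function_Algebras"
begin

text \<open>The symplectic space V = F_q^4; the basis vectors e0,e1,e2,e3 are the
  coordinate vectors axis 1 1, axis 2 1, axis 3 1, axis 4 1.\<close>

definition symp :: "'a::field ^ 4 \<Rightarrow> 'a ^ 4 \<Rightarrow> 'a" where
  "symp x y = x$1 * y$4 - x$4 * y$1 + x$2 * y$3 - x$3 * y$2"

definition gq_points :: "('a::field ^ 4) set set" where
  "gq_points = {S. vec.subspace S \<and> vec.dim S = 1}"

definition gq_lines :: "('a::field ^ 4) set set" where
  "gq_lines = {S. vec.subspace S \<and> vec.dim S = 2 \<and> (\<forall>x\<in>S. \<forall>y\<in>S. symp x y = 0)}"

definition p0 :: "('a::field ^ 4) set" where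
  "p0 = vec.span {axis 1 1}"

definition l0 :: "('a::field ^ 4) set" where
  "l0 = vec.span {axis 1 1, axis 2 1}"

definition P1 :: "('a::field ^ 4) set set" where
  "P1 = {p \<in> gq_points. \<exists>v\<in>p. v$4 \<noteq> 0}"

definition L1 :: "('a::field ^ 4) set set" where
  "L1 = {l \<in> gq_lines. \<not> (\<exists>p\<in>gq_points. p \<subseteq> l \<and> p \<subseteq> l0)}"

definition chi :: "('a::field ^ 4) set \<Rightarrow> ('a ^ 4) set \<Rightarrow> bit" where
  "chi l = (\<lambda>p. if p \<in> gq_points \<and> p \<subseteq> l then 1 else 0)"

definition fscale :: "bit \<Rightarrow> ('b \<Rightarrow> bit) \<Rightarrow> ('b \<Rightarrow> bit)" where
  "fscale c f = (\<lambda>x. c * f x)"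

interpretation F2fun: vector_space "fscale :: bit \<Rightarrow> ('b \<Rightarrow> bit) \<Rightarrow> ('b \<Rightarrow> bit)"
  by unfold_locales (simp_all only: fscale_def plus_fun_def fun_eq_iff distrib_left distrib_right mult.assoc mult_1 simp_thms)

definition CPL1 :: "(('a::field ^ 4) set \<Rightarrow> bit) set" where
  "CPL1 = F2fun.span (chi ` L1)"

definition ker_piP1 :: "(('a::field ^ 4) set \<Rightarrow> bit) set" where
  "ker_piP1 = {f. \<forall>p\<in>P1. f p = 0}"

end

theory Submission
  imports Defs
begin

(* Every point is pt v = <v> with v \<noteq> 0; the lines through p0 other
   than l0 are the lines  M b = <e0, (0,b,1,0)>  (b \<in> F_q), and the lines of L1 are exactly the
   lines  L a b x = <(a,b,1,0), (x,a,0,1)>.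

   Upper bound.  Two families of F_2-linear functionals ("parity checks"), sums of f over
   suitable point sets, vanish on chi_m for every m \<in> L1 (the second one because q is even),
   hence on C(P,L1).  For f in ker(pi_P1) \<inter> C(P,L1), which also vanishes on the points of l0,
   the first check shows that f is constant on the points (a:b:1:0) of each M b, and the
   second that f equals 1 on an even number H of the lines M b; so f = sum_{b \<in> H} chi_{M b}.

   Lower bound.  In characteristic 2, chi_{M b1} + chi_{M b2} is an explicit sum of 2q
   characteristic functions of L1-lines, and it vanishes on P1.

   With l = M c, the q - 1 functions chi_{M c} + chi_{M b} (b \<noteq> c) therefore span the space
   (an even sum of chi_{M b} regroups into such pairs) and are independent (evaluate at the
   points (0:b:1:0)); the theorem follows. *)


text \<open>In a finite ring the number of elements is zero: translating by 1 permutes the ring.\<close>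
lemma of_nat_CARD_eq_0: "of_nat CARD('a::{ring_1,finite}) = (0::'a)"
proof -
  have "(\<Sum>x\<in>UNIV. x + 1) = (\<Sum>x\<in>(UNIV::'a set). x)"
    by (rule sum.reindex_bij_witness[of _ "\<lambda>x. x - 1" "\<lambda>x. x + 1"]) auto
  thus ?thesis by (simp add: sum.distrib)
qed

lemma field_card_power_of_two:
  assumes "CARD('a::{field,finite}) = 2 ^ t"
  shows "(2::'a) = 0" "even CARD('a)"
proof -
  have two_pow: "(2::'a) ^ t = 0"
    using of_nat_CARD_eq_0[where 'a='a] assms by simp
  thus "(2::'a) = 0" by simp
  have "t > 0" using two_pow by (cases t) auto
  thus "even CARD('a)" using assms by simp
qed

lemma sum_apply: "(\<Sum>i\<in>A. f i) x = (\<Sum>i\<in>A. f i x)"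
  by (induct A rule: infinite_finite_induct) auto

lemma of_nat_bit: "(of_nat n :: bit) = of_bool (odd n)"
  by (induct n) auto

lemma bit_eq_of_bool: "(x::bit) = of_bool (x = 1)"
  by (cases x) auto

lemma bit_add_eq_0: "(a::bit) + b = 0 \<longleftrightarrow> a = b"
  by (cases a; cases b) auto

lemma fun_minus_bit: "(g::'x \<Rightarrow> bit) - h = g + h"
  by (rule ext) (simp add: plus_fun_def)

lemma sum_of_bool_unique:
  assumes "\<And>s. P s \<longleftrightarrow> s = c \<and> Q"
  shows "(\<Sum>s\<in>(UNIV::'a::finite set). of_bool (P s) :: bit) = of_bool Q"
proof -
  have "(\<Sum>s\<in>(UNIV::'a set). of_bool (P s) :: bit) = (\<Sum>s\<in>UNIV. if s = c then of_bool Q else 0)"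
    using assms by (intro sum.cong) auto
  thus ?thesis by simp
qed

lemma sum_of_bool_graph:
  "(\<Sum>b\<in>(UNIV::'b::finite set). \<Sum>c\<in>(UNIV::'c::finite set). of_bool (b = g c \<and> Q c) :: bit)
     = (\<Sum>c\<in>UNIV. of_bool (Q c))"
  by (subst sum.swap, rule sum.cong[OF refl], rule sum_of_bool_unique) auto

lemma count_linear_roots:
  assumes ev: "even CARD('a::{field,finite})"
  shows "(\<Sum>c\<in>(UNIV::'a set). of_bool (c*a + x = 0) :: bit) = of_bool (a \<noteq> 0)"
proof (cases "a = 0")
  case True
  thus ?thesis using ev by (simp add: of_nat_bit)
next
  case False
  have "c*a + x = 0 \<longleftrightarrow> c = (-x)/a \<and> True" for c
    using False by (auto simp: eq_divide_eq add_eq_0_iff)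
  thus ?thesis using sum_of_bool_unique[of "\<lambda>c. c*a + x = 0" "(-x)/a" True] False by simp
qed

lemma span_functional_vanishes:
  assumes "f \<in> F2fun.span A" "\<And>g. g \<in> A \<Longrightarrow> \<phi> g = (0::bit)" "\<phi> 0 = 0"
    "\<And>g h. \<phi> (g + h) = \<phi> g + \<phi> h"
  shows "\<phi> f = 0"
proof -
  have "F2fun.subspace {f. \<phi> f = 0}"
  proof (rule F2fun.subspaceI)
    show "0 \<in> {f. \<phi> f = 0}" using assms(3) by simp
    show "x + y \<in> {f. \<phi> f = 0}" if "x \<in> {f. \<phi> f = 0}" "y \<in> {f. \<phi> f = 0}" for x y
      using that assms(4) by simp
    show "fscale c x \<in> {f. \<phi> f = 0}" if "x \<in> {f. \<phi> f = 0}" for c x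
    proof (cases "c = 0")
      case True
      hence "fscale c x = 0" by (simp add: fscale_def fun_eq_iff)
      thus ?thesis using assms(3) by (simp only: mem_Collect_eq)
    next
      case False
      hence "fscale c x = x" by (simp add: fscale_def fun_eq_iff)
      thus ?thesis using that by simp
    qed
  qed
  thus ?thesis using F2fun.span_induct[OF assms(1), of "\<lambda>f. \<phi> f = 0"] assms(2) by blast
qed

lemma independent_by_evaluation:
  fixes g :: "'i \<Rightarrow> 'x \<Rightarrow> bit" and w :: "'i \<Rightarrow> 'x"
  assumes dual: "\<And>i j. i \<in> I \<Longrightarrow> j \<in> I \<Longrightarrow> g j (w i) = of_bool (i = j)"
  shows "F2fun.independent (g ` I)"
  unfolding F2fun.independent_explicit_finite_subsets
proof (intro allI impI ballI)
  fix S u v assume S: "S \<subseteq> g ` I" "finite S" and sum0: "(\<Sum>h\<in>S. fscale (u h) h) = 0"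
    and vS: "v \<in> S"
  obtain i where i: "i \<in> I" "v = g i" using vS S(1) by blast
  have eval: "h (w i) = of_bool (h = v)" if hS: "h \<in> S" for h
  proof -
    obtain j where j: "j \<in> I" "h = g j" using hS S(1) by blast
    have "g i (w i) = 1" using dual[OF i(1) i(1)] by simp
    hence "h = v \<longleftrightarrow> i = j" using dual[OF i(1) j(1)] i(2) j(2) by (metis of_bool_eq(1) zero_neq_one)
    thus ?thesis using dual[OF i(1) j(1)] j(2) by simp
  qed
  have "0 = (\<Sum>h\<in>S. fscale (u h) h) (w i)" using sum0 by simp
  also have "\<dots> = (\<Sum>h\<in>S. if h = v then u h else 0)"
    unfolding sum_apply fscale_def by (rule sum.cong) (simp_all add: eval)
  also have "\<dots> = u v" using S(2) vS by simp
  finally show "u v = 0" by simp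
qed

lemma even_sum_as_pairs:
  fixes h :: "'b \<Rightarrow> 'x \<Rightarrow> bit"
  assumes fin: "finite H" and ev: "even (card H)"
  shows "(\<Sum>b\<in>H. h b) = (\<Sum>b\<in>H - {c}. h c + h b)"
proof -
  have const: "(\<Sum>b\<in>A. h c) = (if odd (card A) then h c else 0)" for A :: "'b set"
    by (rule ext) (simp add: sum_apply of_nat_bit)
  show ?thesis
  proof (cases "c \<in> H")
    case True
    have "card H > 0" "card (H - {c}) = card H - 1"
      using fin True card_gt_0_iff by (blast, simp add: card_Diff_singleton)
    hence "odd (card (H - {c}))" using ev by presburger
    hence "(\<Sum>b\<in>H - {c}. h c + h b) = h c + (\<Sum>b\<in>H - {c}. h b)"
      by (simp only: sum.distrib const not_False_eq_True if_True)
    also have "\<dots> = (\<Sum>b\<in>H. h b)" by (rule sum.remove[OF fin True, symmetric])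
    finally show ?thesis ..
  next
    case False
    hence "(\<Sum>b\<in>H - {c}. h c + h b) = (\<Sum>b\<in>H. h b)"
      using ev by (simp only: Diff_insert_absorb sum.distrib const) simp
    thus ?thesis ..
  qed
qed


subsection \<open>Coordinates: vectors, points and lines of the symplectic space\<close>

definition mk4 :: "'a \<Rightarrow> 'a \<Rightarrow> 'a \<Rightarrow> 'a \<Rightarrow> 'a^4" where
  "mk4 a b c d = (\<chi> i. if i = 1 then a else if i = 2 then b else if i = 3 then c else d)"

lemma mk4_nth [simp]:
  "mk4 a b c d $ 1 = a" "mk4 a b c d $ 2 = b" "mk4 a b c d $ 3 = c" "mk4 a b c d $ 4 = d"
  by (simp_all add: mk4_def)

lemma vec4_eq_iff: "(x::'a^4) = y \<longleftrightarrow> x$1 = y$1 \<and> x$2 = y$2 \<and> x$3 = y$3 \<and> x$4 = y$4"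
  by (simp add: vec_eq_iff forall_4)

lemma axis_mk4 [simp]:
  "(axis 1 1 :: 'a::field^4) = mk4 1 0 0 0" "(axis 2 1 :: 'a::field^4) = mk4 0 1 0 0"
  by (simp_all add: vec4_eq_iff axis_def)

lemma mk4_arith [simp]:
  "c *s mk4 a b d e = mk4 (c*a) (c*b) (c*d) (c*e)"
  "mk4 a b d e + mk4 a' b' d' e' = mk4 (a+a') (b+b') (d+d') (e+e')"
  "mk4 a b d e = 0 \<longleftrightarrow> a = 0 \<and> b = 0 \<and> d = 0 \<and> e = 0"
  by (simp_all add: vec4_eq_iff)

definition pt :: "'a::field^4 \<Rightarrow> ('a^4) set" where "pt v = vec.span {v}"

lemma pt_point: "v \<noteq> 0 \<Longrightarrow> pt v \<in> gq_points"
  unfolding gq_points_def pt_def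
  by (simp add: vec.dim_span_eq_card_independent vec.independent_insert)

lemma point_pt:
  assumes "p \<in> gq_points"
  obtains v where "v \<noteq> 0" "p = pt v"
proof -
  from assms have S: "vec.subspace p" "vec.dim p = 1" by (auto simp: gq_points_def)
  obtain B where B: "B \<subseteq> p" "vec.independent B" "p \<subseteq> vec.span B" "card B = vec.dim p"
    by (rule vec.basis_exists)
  then obtain v where "B = {v}" using S card_1_singletonE by metis
  with B have "v \<noteq> 0" using vec.dependent_zero by blast
  moreover have "p = pt v"
    using B \<open>B = {v}\<close> S unfolding pt_def by (metis vec.span_minimal subset_antisym)
  ultimately show ?thesis using that by blast
qed

lemma pt_subset_iff: "vec.subspace S \<Longrightarrow> pt v \<subseteq> S \<longleftrightarrow> v \<in> S"
  unfolding pt_def using vec.span_minimal vec.span_base by blast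

lemma pt_scale:
  assumes "c \<noteq> 0" shows "pt (c *s v) = pt v"
proof -
  have "(\<exists>k. x = k *s (c *s v)) \<longleftrightarrow> (\<exists>k. x = k *s v)" for x
  proof
    assume "\<exists>k. x = k *s (c *s v)" thus "\<exists>k. x = k *s v" by (metis vector_smult_assoc)
  next
    assume "\<exists>k. x = k *s v"
    then obtain k where "x = k *s v" by blast
    thus "\<exists>k. x = k *s (c *s v)" using assms by (intro exI[of _ "k/c"]) simp
  qed
  thus ?thesis unfolding pt_def vec.span_singleton by auto
qed

lemma chi_pt: "v \<noteq> 0 \<Longrightarrow> vec.subspace S \<Longrightarrow> chi S (pt v) = of_bool (v \<in> S)"
  unfolding chi_def using pt_point pt_subset_iff by auto

lemma chi_nonpoint: "p \<notin> gq_points \<Longrightarrow> chi S p = 0"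
  unfolding chi_def by auto

text \<open>Different subspaces have different characteristic functions, so chi l - chi l'
  determines l'.\<close>
lemma chi_diff_inj_on:
  fixes S :: "('a::field ^ 4) set set"
  assumes sub: "\<And>m. m \<in> S \<Longrightarrow> vec.subspace m"
  shows "inj_on (\<lambda>l'. chi l - chi l') S"
proof (rule inj_onI)
  fix m m' assume m: "m \<in> S" "m' \<in> S" and eq: "chi l - chi m = chi l - chi m'"
  have chi_eq: "chi m = chi m'" using eq by (simp only: fun_minus_bit add_left_cancel)
  have "v \<in> m \<longleftrightarrow> v \<in> m'" for v
  proof (cases "v = 0")
    case True thus ?thesis using sub m vec.subspace_0 by blast
  next
    case False thus ?thesis using chi_eq chi_pt[OF False sub[OF m(1)]] chi_pt[OF False sub[OF m(2)]]
      by (metis of_bool_eq_iff)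
  qed
  thus "m = m'" by blast
qed

lemma mem_span2: "x \<in> vec.span {u, w} \<longleftrightarrow> (\<exists>s r. x = s *s u + r *s w)"
proof -
  have "\<And>k r. x - k *s u = r *s w \<longleftrightarrow> x = k *s u + r *s w"
    by (metis add.commute diff_eq_eq)
  thus ?thesis unfolding vec.span_breakdown_eq vec.span_singleton by auto
qed

lemma symp_span2: "symp (s *s u + r *s w) (s' *s u + r' *s w) = (s * r' - r * s') * symp u w"
  unfolding symp_def by (simp add: algebra_simps)

lemma span2_line:
  assumes minor: "u$i * w$j \<noteq> u$j * w$i" and orth: "symp u w = 0"
  shows "vec.span {u, w} \<in> gq_lines"
proof -
  have "u \<notin> vec.span {w}"
  proof
    assume "u \<in> vec.span {w}"
    then obtain k where "u = k *s w" unfolding vec.span_singleton by auto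
    thus False using minor by (simp add: mult.commute mult.left_commute)
  qed
  moreover have "w \<noteq> 0" "u \<noteq> w" using minor by (auto simp: mult.commute)
  ultimately have "vec.independent {u, w}" "card {u, w} = 2"
    by (simp_all add: vec.independent_insert)
  hence "vec.dim (vec.span {u, w}) = 2" by (simp add: vec.dim_span vec.dim_eq_card_independent)
  moreover have "symp x y = 0" if "x \<in> vec.span {u, w}" "y \<in> vec.span {u, w}" for x y
    using that orth unfolding mem_span2 by (auto simp: symp_span2)
  ultimately show ?thesis unfolding gq_lines_def by simp
qed

lemma independent2_coeffs:
  assumes "vec.independent {a, b}" "a \<noteq> b" "s *s a + r *s b = 0"
  shows "s = 0" "r = 0"
proof -
  have sum: "(\<Sum>v\<in>{a,b}. (if v = a then s else r) *s v) = s *s a + r *s b" using assms(2) by simp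
  have indep: "\<forall>S\<subseteq>{a,b}. finite S \<longrightarrow> (\<forall>u. (\<Sum>v\<in>S. u v *s v) = 0 \<longrightarrow> (\<forall>v\<in>S. u v = 0))"
    using assms(1) unfolding vec.independent_explicit_finite_subsets .
  have "\<forall>v\<in>{a,b}. (if v = a then s else r) = 0"
    using indep[rule_format, OF order_refl, of "\<lambda>v. if v = a then s else r"] sum assms(3) by simp
  thus "s = 0" "r = 0" using assms(2) by auto
qed


subsection \<open>The lines through p0 and the lines of L1\<close>

lemma mem_p0: "x \<in> (p0::('a::field^4) set) \<longleftrightarrow> x$2 = 0 \<and> x$3 = 0 \<and> x$4 = 0"
proof -
  have "(\<exists>k. x = k *s mk4 1 0 0 (0::'a)) \<longleftrightarrow> x$2 = 0 \<and> x$3 = 0 \<and> x$4 = 0"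
    by (auto simp: vec4_eq_iff)
  thus ?thesis unfolding p0_def vec.span_singleton by (auto simp: image_def)
qed

lemma mem_l0: "x \<in> (l0::('a::field^4) set) \<longleftrightarrow> x$3 = 0 \<and> x$4 = 0"
  unfolding l0_def mem_span2 by (auto simp: vec4_eq_iff intro!: exI[of _ "x$1"] exI[of _ "x$2"])

text \<open>The lines through p0 other than l0 (Lemma \<open>lines_through_p0\<close> below).\<close>
definition lineM :: "'a::field \<Rightarrow> ('a^4) set" where
  "lineM b = vec.span {mk4 1 0 0 0, mk4 0 b 1 0}"

text \<open>The lines of L1 (Lemma \<open>L1_lineL\<close> below).\<close>
definition lineL :: "'a::field \<Rightarrow> 'a \<Rightarrow> 'a \<Rightarrow> ('a^4) set" where
  "lineL a b x = vec.span {mk4 a b 1 0, mk4 x a 0 1}"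

lemma mem_lineM: "v \<in> lineM b \<longleftrightarrow> v$4 = 0 \<and> v$2 = b * v$3"
  unfolding lineM_def mem_span2
  by (auto simp: vec4_eq_iff mult.commute intro!: exI[of _ "v$1"] exI[of _ "v$3"])

lemma mem_lineL: "v \<in> lineL a b x \<longleftrightarrow> v$1 = v$3*a + v$4*x \<and> v$2 = v$3*b + v$4*a"
  unfolding lineL_def mem_span2 by (auto simp: vec4_eq_iff intro!: exI[of _ "v$3"] exI[of _ "v$4"])

lemma subspace_lines [simp]:
  "vec.subspace (lineM b)" "vec.subspace (lineL a b x)" "vec.subspace l0" "vec.subspace p0"
  unfolding lineM_def lineL_def l0_def p0_def by simp_all

lemma chi_lineM: "v \<noteq> 0 \<Longrightarrow> chi (lineM b) (pt v) = of_bool (v$4 = 0 \<and> v$2 = b * v$3)"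
  by (simp add: chi_pt mem_lineM)

lemma chi_lineL:
  "v \<noteq> 0 \<Longrightarrow> chi (lineL a b x) (pt v) = of_bool (v$1 = v$3*a + v$4*x \<and> v$2 = v$3*b + v$4*a)"
  by (simp add: chi_pt mem_lineL)

lemma lineM_line: "lineM b \<in> gq_lines"
  unfolding lineM_def by (rule span2_line[of _ 1 _ 3]) (simp_all add: symp_def)

lemma lineL_line: "lineL a b x \<in> gq_lines"
  unfolding lineL_def by (rule span2_line[of _ 3 _ 4]) (simp_all add: symp_def)

lemma l0_line: "(l0::('a::field^4) set) \<in> gq_lines"
  unfolding l0_def by (simp, rule span2_line[of _ 1 _ 2]) (simp_all add: symp_def)

lemma lineM_eq_iff: "lineM b = lineM b' \<longleftrightarrow> b = b'"
  using mem_lineM[of "mk4 0 b 1 0"] by auto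

lemma lineL_in_L1: "lineL a b x \<in> L1"
proof -
  have "\<not> (p \<subseteq> lineL a b x \<and> p \<subseteq> l0)" if p: "p \<in> gq_points" for p
  proof -
    obtain v where v: "v \<noteq> 0" "p = pt v" using point_pt[OF p] by metis
    have "\<not> (v \<in> lineL a b x \<and> v \<in> l0)"
      using v(1) by (auto simp: mem_lineL mem_l0 vec4_eq_iff)
    thus ?thesis using v(2) by (simp add: pt_subset_iff)
  qed
  thus ?thesis unfolding L1_def using lineL_line by blast
qed

text \<open>A line through p0 lies in the hyperplane x4 = 0 orthogonal to e0; if it is not l0 it
  meets x3 = 1, which determines it as some lineM b.\<close>
lemma lines_through_p0:
  fixes l :: "('a::field^4) set"
  assumes "l \<in> gq_lines" "p0 \<subseteq> l" "l \<noteq> l0"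
  obtains b where "l = lineM b"
proof -
  have S: "vec.subspace l" "vec.dim l = 2" and iso: "\<forall>x\<in>l. \<forall>y\<in>l. symp x y = 0"
    using assms(1) by (auto simp: gq_lines_def)
  have e0: "mk4 1 0 0 0 \<in> l" using assms(2) by (auto simp: mem_p0)
  have h4: "x$4 = 0" if x: "x \<in> l" for x
  proof -
    have "symp (mk4 1 0 0 0) x = 0" using iso e0 x by blast
    thus ?thesis by (simp add: symp_def)
  qed
  have "\<not> l \<subseteq> l0"
  proof
    assume "l \<subseteq> l0"
    hence "l = l0" using S l0_line[where 'a='a] by (intro vec.subspace_dim_equal) (auto simp: gq_lines_def)
    thus False using assms(3) by contradiction
  qed
  then obtain x where "x \<in> l" "x \<notin> l0" by blast
  hence x: "x \<in> l" "x$3 \<noteq> 0" using h4 by (auto simp: mem_l0)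
  define u where "u = (1/x$3) *s x + (- x$1/x$3) *s mk4 1 0 0 0"
  have "u \<in> l" unfolding u_def using S x e0 by (intro vec.subspace_add vec.subspace_scale) auto
  moreover have "u = mk4 0 (x$2/x$3) 1 0" unfolding u_def using x h4 by (simp add: vec4_eq_iff)
  ultimately have "lineM (x$2/x$3) \<subseteq> l" unfolding lineM_def using e0 S by (intro vec.span_minimal) auto
  hence "lineM (x$2/x$3) = l" using S lineM_line[of "x$2/x$3"]
    by (intro vec.subspace_dim_equal) (auto simp: gq_lines_def)
  thus ?thesis using that by metis
qed

lemma other_lines_through_p0:
  "{l' \<in> gq_lines. p0 \<subseteq> l' \<and> l' \<noteq> l0 \<and> l' \<noteq> lineM c} = lineM ` (UNIV - {c})"
proof
  show "{l' \<in> gq_lines. p0 \<subseteq> l' \<and> l' \<noteq> l0 \<and> l' \<noteq> lineM c} \<subseteq> lineM ` (UNIV - {c})"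
    by (auto elim: lines_through_p0)
  have "p0 \<subseteq> lineM b" for b :: 'a by (auto simp: mem_p0 mem_lineM)
  moreover have "lineM b \<noteq> l0" for b :: 'a
  proof
    assume "lineM b = l0"
    moreover have "mk4 0 b 1 0 \<in> lineM b" by (simp add: mem_lineM)
    ultimately show False by (simp add: mem_l0)
  qed
  ultimately show "lineM ` (UNIV - {c}) \<subseteq> {l' \<in> gq_lines. p0 \<subseteq> l' \<and> l' \<noteq> l0 \<and> l' \<noteq> lineM c}"
    by (auto simp: lineM_line lineM_eq_iff)
qed

lemma L1_meets_l0_trivially:
  assumes "m \<in> L1" "v \<in> m" "v$3 = 0" "v$4 = 0"
  shows "v = 0"
proof (rule ccontr)
  assume "v \<noteq> 0"
  have "vec.subspace m" using assms(1) by (simp add: L1_def gq_lines_def)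
  hence "pt v \<subseteq> m" "pt v \<subseteq> l0" using assms(2-4) by (simp_all add: pt_subset_iff mem_l0)
  thus False using assms(1) pt_point[OF \<open>v \<noteq> 0\<close>] by (auto simp: L1_def)
qed

text \<open>Hence the projection of a line of L1 to the last two coordinates is injective, so
  bijective: the line contains vectors with (x3,x4) = (1,0) and (0,1).\<close>
lemma L1_unit_vectors:
  fixes m :: "('a::field^4) set"
  assumes L1: "m \<in> L1"
  obtains y w where "y \<in> m" "w \<in> m" "y$3 = 1" "y$4 = 0" "w$3 = 0" "w$4 = 1"
proof -
  have S: "vec.subspace m" "vec.dim m = 2" using L1 by (auto simp: L1_def gq_lines_def)
  obtain B where B: "B \<subseteq> m" "vec.independent B" "m \<subseteq> vec.span B" "card B = vec.dim m"
    by (rule vec.basis_exists)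
  have "card B = 2" using B(4) S(2) by simp
  then obtain a b where ab: "B = {a, b}" "a \<noteq> b" by (auto simp: card_2_iff)
  have am: "a \<in> m" and bm: "b \<in> m" and ind: "vec.independent {a,b}" using B(1,2) ab(1) by auto
  have comb: "s *s a - r *s b \<in> m" for s r
    using S am bm by (intro vec.subspace_diff vec.subspace_scale) auto
  have zero: "s *s a - r *s b = 0" if "s * a$3 = r * b$3" "s * a$4 = r * b$4" for s r
    using L1_meets_l0_trivially[OF L1 comb] that by simp
  define D where "D = a$3 * b$4 - a$4 * b$3"
  have D0: "D \<noteq> 0"
  proof
    assume D: "D = 0"
    have e4: "b$4 *s a + (- a$4) *s b = 0" using zero[of "b$4" "a$4"] D unfolding D_def
      by (simp add: mult.commute)
    have a4: "b$4 = 0" "a$4 = 0" using independent2_coeffs[OF ind ab(2) e4] by simp_all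
    have e3: "b$3 *s a + (- a$3) *s b = 0" using zero[of "b$3" "a$3"] a4 by (simp add: mult.commute)
    have "b$3 = 0" "a$3 = 0" using independent2_coeffs[OF ind ab(2) e3] by simp_all
    hence "a = 0" using L1_meets_l0_trivially[OF L1 am] a4 by simp
    thus False using ind vec.dependent_zero by blast
  qed
  define y where "y = (b$4/D) *s a - (a$4/D) *s b"
  define w where "w = (- b$3/D) *s a - (- a$3/D) *s b"
  have "y$3 = D / D" "w$4 = D / D" unfolding y_def w_def D_def by (simp_all add: field_simps)
  moreover have "y$4 = 0" "w$3 = 0" unfolding y_def w_def by (simp_all add: field_simps)
  moreover have "y \<in> m" "w \<in> m" unfolding y_def w_def by (rule comb)+
  ultimately show ?thesis using that D0 by simp
qed

text \<open>Every line of L1 is some lineL a b x: the vectors found above have the form (a,b,1,0)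
  and (x,a',0,1), and orthogonality forces a' = a.\<close>
lemma L1_lineL:
  fixes m :: "('a::field^4) set"
  assumes L1: "m \<in> L1"
  obtains a b x where "m = lineL a b x"
proof -
  obtain y w where yw: "y \<in> m" "w \<in> m" "y$3 = 1" "y$4 = 0" "w$3 = 0" "w$4 = 1"
    using L1_unit_vectors[OF L1] by blast
  have S: "vec.subspace m" "vec.dim m = 2" and iso: "\<forall>x\<in>m. \<forall>y\<in>m. symp x y = 0"
    using L1 by (auto simp: L1_def gq_lines_def)
  have "symp y w = 0" using iso yw by blast
  hence "w$2 = y$1" using yw by (simp add: symp_def)
  hence "y = mk4 (y$1) (y$2) 1 0" "w = mk4 (w$1) (y$1) 0 1" using yw by (simp_all add: vec4_eq_iff)
  hence "mk4 (y$1) (y$2) 1 0 \<in> m" "mk4 (w$1) (y$1) 0 1 \<in> m" using yw by metis+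
  hence "lineL (y$1) (y$2) (w$1) \<subseteq> m" unfolding lineL_def using S by (intro vec.span_minimal) auto
  hence "lineL (y$1) (y$2) (w$1) = m" using S lineL_line[of "y$1" "y$2" "w$1"]
    by (intro vec.subspace_dim_equal) (auto simp: gq_lines_def)
  thus ?thesis using that by metis
qed


subsection \<open>Parity checks vanishing on C(P,L1)\<close>

lemma CPL1_functional_vanishes:
  fixes f :: "('a::field^4) set \<Rightarrow> bit" and \<phi> :: "(('a^4) set \<Rightarrow> bit) \<Rightarrow> bit"
  assumes "f \<in> CPL1" "\<And>a b x. \<phi> (chi (lineL a b x)) = 0"
    "\<phi> 0 = 0" "\<And>g h. \<phi> (g + h) = \<phi> g + \<phi> h"
  shows "\<phi> f = 0"
proof (rule span_functional_vanishes[OF assms(1)[unfolded CPL1_def], of \<phi>])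
  fix g :: "('a^4) set \<Rightarrow> bit" assume "g \<in> chi ` L1"
  then obtain m where m: "m \<in> L1" "g = chi m" by blast
  obtain a b x where "m = lineL a b x" using L1_lineL[OF m(1)] .
  thus "\<phi> g = 0" using m(2) assms(2) by simp
qed (use assms(3,4) in auto)

lemma CPL1_vanishes_off_points:
  fixes f :: "('a::field^4) set \<Rightarrow> bit"
  assumes "f \<in> CPL1" "p \<notin> gq_points"
  shows "f p = 0"
  using CPL1_functional_vanishes[OF assms(1), of "\<lambda>g. g p"] assms(2) by (simp add: chi_nonpoint)

lemma CPL1_vanishes_on_l0:
  fixes f :: "('a::field^4) set \<Rightarrow> bit"
  assumes "f \<in> CPL1" "p \<in> gq_points" "p \<subseteq> l0"
  shows "f p = 0"
proof (rule CPL1_functional_vanishes[OF assms(1), of "\<lambda>g. g p"])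
  show "chi (lineL a b x) p = 0" for a b x
    using lineL_in_L1[of a b x] assms(2,3) by (auto simp: L1_def chi_def)
qed simp_all

definition pair_check :: "'a \<Rightarrow> 'a \<Rightarrow> 'a \<Rightarrow> (('a::{field,finite}^4) set \<Rightarrow> bit) \<Rightarrow> bit" where
  "pair_check a1 a2 b f = f (pt (mk4 a1 b 1 0)) + f (pt (mk4 a2 b 1 0))
     + (\<Sum>s\<in>UNIV. f (pt (mk4 (s*a1) (s*b + a2) s 1)))
     + (\<Sum>s\<in>UNIV. f (pt (mk4 (s*a2) (s*b + a1) s 1)))"

definition cross_check :: "(('a::{field,finite}^4) set \<Rightarrow> bit) \<Rightarrow> bit" where
  "cross_check f = (\<Sum>b\<in>UNIV. \<Sum>c\<in>UNIV. f (pt (mk4 0 b c 1)))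
     + (\<Sum>a\<in>UNIV. \<Sum>c\<in>UNIV. f (pt (mk4 a 0 c 1)))
     + (\<Sum>b\<in>UNIV. f (pt (mk4 0 b 1 0))) + (\<Sum>a\<in>UNIV. f (pt (mk4 a 0 1 0)))"

lemma pair_check_additive:
  "pair_check a1 a2 b (g + h) = pair_check a1 a2 b g + pair_check a1 a2 b h"
  "pair_check a1 a2 b 0 = 0"
  unfolding pair_check_def plus_fun_apply zero_fun_apply sum.distrib
  by (simp_all only: ac_simps sum.neutral_const add_0)

lemma cross_check_additive: "cross_check (g + h) = cross_check g + cross_check h" "cross_check 0 = 0"
  unfolding cross_check_def plus_fun_apply zero_fun_apply sum.distrib
  by (simp_all only: ac_simps sum.neutral_const add_0)

lemma count_pair_points:
  fixes u w :: "'a::{field,finite}"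
  assumes "u \<noteq> w"
  shows "(\<Sum>s\<in>UNIV. of_bool (s*u = s*\<alpha> + x \<and> s*b + w = s*\<beta> + \<alpha>) :: bit)
       = (if b = \<beta> then of_bool (\<alpha> = w) else of_bool ((\<alpha> - w)*(u - \<alpha>) = x*(b - \<beta>)))"
proof (cases "b = \<beta>")
  case True
  have "(s*u = s*\<alpha> + x \<and> s*b + w = s*\<beta> + \<alpha>) \<longleftrightarrow> s = x/(u - \<alpha>) \<and> \<alpha> = w" for s
    using True assms by (auto simp: eq_divide_eq algebra_simps)
  thus ?thesis using True by (simp add: sum_of_bool_unique)
next
  case False
  hence d: "b - \<beta> \<noteq> 0" by simp
  have "(s*u = s*\<alpha> + x \<and> s*b + w = s*\<beta> + \<alpha>)
      \<longleftrightarrow> s = (\<alpha> - w)/(b - \<beta>) \<and> (\<alpha> - w)*(u - \<alpha>) = x*(b - \<beta>)" for s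
  proof -
    have "s*b + w = s*\<beta> + \<alpha> \<longleftrightarrow> s = (\<alpha> - w)/(b - \<beta>)"
      using d by (auto simp: eq_divide_eq algebra_simps)
    moreover have "((\<alpha> - w)/(b - \<beta>))*u = ((\<alpha> - w)/(b - \<beta>))*\<alpha> + x
        \<longleftrightarrow> (\<alpha> - w)*(u - \<alpha>) = x*(b - \<beta>)"
      using d by (auto simp: field_simps)
    ultimately show ?thesis by auto
  qed
  thus ?thesis using False by (simp add: sum_of_bool_unique)
qed

lemma pair_check_lineL:
  assumes "a1 \<noteq> a2"
  shows "pair_check a1 a2 b (chi (lineL \<alpha> \<beta> x)) = 0"
proof -
  have products: "(\<alpha> - a2)*(a1 - \<alpha>) = (\<alpha> - a1)*(a2 - \<alpha>)" by (simp add: algebra_simps)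
  have "pair_check a1 a2 b (chi (lineL \<alpha> \<beta> x))
      = of_bool (a1 = \<alpha> \<and> b = \<beta>) + of_bool (a2 = \<alpha> \<and> b = \<beta>)
        + (\<Sum>s\<in>UNIV. of_bool (s*a1 = s*\<alpha> + x \<and> s*b + a2 = s*\<beta> + \<alpha>))
        + (\<Sum>s\<in>UNIV. of_bool (s*a2 = s*\<alpha> + x \<and> s*b + a1 = s*\<beta> + \<alpha>))"
    unfolding pair_check_def by (simp add: chi_lineL)
  also have "\<dots> = 0"
    unfolding count_pair_points[OF assms] count_pair_points[OF assms[symmetric]] products
    using assms by auto
  finally show ?thesis .
qed

lemma cross_check_lineL:
  assumes ev: "even CARD('a::{field,finite})"
  shows "cross_check (chi (lineL (\<alpha>::'a) \<beta> x)) = 0"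
proof -
  have A: "(\<Sum>b\<in>UNIV. \<Sum>c\<in>UNIV. chi (lineL \<alpha> \<beta> x) (pt (mk4 0 b c 1))) = of_bool (\<alpha> \<noteq> 0)"
    using sum_of_bool_graph[of "\<lambda>c. c*\<beta> + \<alpha>" "\<lambda>c. c*\<alpha> + x = 0"] count_linear_roots[OF ev]
    by (simp add: chi_lineL conj_commute eq_commute[of 0])
  have B: "(\<Sum>a\<in>UNIV. \<Sum>c\<in>UNIV. chi (lineL \<alpha> \<beta> x) (pt (mk4 a 0 c 1))) = of_bool (\<beta> \<noteq> 0)"
    using sum_of_bool_graph[of "\<lambda>c. c*\<alpha> + x" "\<lambda>c. c*\<beta> + \<alpha> = 0"] count_linear_roots[OF ev]
    by (simp add: chi_lineL eq_commute[of 0])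
  have C: "(\<Sum>b\<in>UNIV. chi (lineL \<alpha> \<beta> x) (pt (mk4 0 b 1 0))) = of_bool (\<alpha> = 0)"
    by (simp add: chi_lineL sum_of_bool_unique[of _ \<beta>] eq_commute[of 0])
  have D: "(\<Sum>a\<in>UNIV. chi (lineL \<alpha> \<beta> x) (pt (mk4 a 0 1 0))) = of_bool (\<beta> = 0)"
    by (simp add: chi_lineL sum_of_bool_unique[of _ \<alpha>] eq_commute[of 0])
  show ?thesis unfolding cross_check_def A B C D by (cases "\<alpha> = 0"; cases "\<beta> = 0") simp_all
qed


subsection \<open>Functions in ker(pi_P1) \<inter> C(P,L1) are even sums of the chi (lineM b)\<close>

lemma pt_in_P1: "v$4 \<noteq> 0 \<Longrightarrow> pt v \<in> P1"
  unfolding P1_def pt_def using pt_point[unfolded pt_def, of v] vec.span_base[of v "{v}"] by force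

lemma point_cases:
  assumes "p \<in> gq_points"
  obtains "p \<in> P1" | "p \<subseteq> l0" | a b where "p = pt (mk4 a b 1 (0::'a::field))"
proof -
  obtain v where v: "v \<noteq> 0" "p = pt v" using point_pt[OF assms] by metis
  consider "v$4 \<noteq> 0" | "v$4 = 0" "v$3 = 0" | "v$4 = 0" "v$3 \<noteq> 0" by blast
  thus ?thesis
  proof cases
    case 1
    hence "p \<in> P1" using v(2) by (simp add: pt_in_P1)
    thus ?thesis using that by blast
  next
    case 2
    hence "p \<subseteq> l0" using v(2) by (simp add: pt_subset_iff mem_l0)
    thus ?thesis using that by blast
  next
    case 3
    hence "(1/v$3) *s v = mk4 (v$1/v$3) (v$2/v$3) 1 0" by (simp add: vec4_eq_iff)
    hence "p = pt (mk4 (v$1/v$3) (v$2/v$3) 1 0)" using v(2) pt_scale[of "1/v$3" v] 3 by simp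
    thus ?thesis using that by blast
  qed
qed

lemma chi_lineM_P1: "p \<in> P1 \<Longrightarrow> chi (lineM b) p = 0"
  by (auto simp: P1_def chi_def mem_lineM)

lemma chi_lineM_l0: "p \<subseteq> l0 \<Longrightarrow> chi (lineM b) p = chi p0 p"
proof (cases "p \<in> gq_points")
  case True
  assume "p \<subseteq> l0"
  moreover obtain v where v: "v \<noteq> 0" "p = pt v" using point_pt[OF True] by metis
  ultimately have "v$3 = 0" "v$4 = 0" by (simp_all add: pt_subset_iff mem_l0)
  thus ?thesis using v by (simp add: chi_pt mem_lineM mem_p0)
qed (simp add: chi_nonpoint)

lemma chi_lineM_affine: "chi (lineM b) (pt (mk4 a b' 1 0)) = of_bool (b' = b)"
  by (simp add: chi_lineM)

text \<open>By the first check, a function in the kernel takes the same value at all points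
  (a:b:1:0) of lineM b outside p0.\<close>
lemma kernel_constant_on_lineM:
  assumes fk: "f \<in> ker_piP1" and fc: "f \<in> CPL1"
  shows "f (pt (mk4 a1 b 1 0)) = f (pt (mk4 a2 b 1 (0::'a::{field,finite})))"
proof (cases "a1 = a2")
  case False
  have "pair_check a1 a2 b f = 0"
    using CPL1_functional_vanishes[OF fc, of "pair_check a1 a2 b"]
    by (simp add: pair_check_lineL[OF False] pair_check_additive)
  moreover have "f (pt (mk4 a b' s 1)) = 0" for a b' s :: 'a
    using fk by (simp add: ker_piP1_def pt_in_P1)
  ultimately have "f (pt (mk4 a1 b 1 0)) + f (pt (mk4 a2 b 1 0)) = 0" by (simp add: pair_check_def)
  thus ?thesis by (simp only: bit_add_eq_0)
qed simp

text \<open>By the second check, a function in the kernel equals 1 on an even number of the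
  points (0:b:1:0), i.e. on an even number of the lines lineM b.\<close>
lemma kernel_even_support:
  assumes ev: "even CARD('a::{field,finite})" and fk: "f \<in> ker_piP1" and fc: "f \<in> CPL1"
  shows "even (card {b::'a. f (pt (mk4 0 b 1 0)) = 1})"
proof -
  have "cross_check f = 0"
    using CPL1_functional_vanishes[OF fc, of cross_check]
    by (simp add: cross_check_lineL[OF ev] cross_check_additive)
  moreover have "f (pt (mk4 a b s 1)) = 0" for a b s :: 'a
    using fk by (simp add: ker_piP1_def pt_in_P1)
  moreover have "(\<Sum>a\<in>UNIV. f (pt (mk4 a 0 1 (0::'a)))) = (\<Sum>a::'a\<in>UNIV. f (pt (mk4 0 0 1 0)))"
    by (intro sum.cong refl) (rule kernel_constant_on_lineM[OF fk fc])
  hence "(\<Sum>a\<in>UNIV. f (pt (mk4 a 0 1 (0::'a)))) = 0" using ev by (simp add: of_nat_bit)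
  ultimately have "(\<Sum>b\<in>UNIV. f (pt (mk4 0 b 1 (0::'a)))) = 0"
    by (simp add: cross_check_def)
  moreover have "(\<Sum>b\<in>UNIV. f (pt (mk4 0 b 1 (0::'a))))
      = of_nat (card {b::'a. f (pt (mk4 0 b 1 0)) = 1})"
    by (subst bit_eq_of_bool) simp
  ultimately show ?thesis by (simp add: of_nat_bit)
qed

lemma kernel_decomposition:
  fixes f :: "('a::{field,finite}^4) set \<Rightarrow> bit"
  assumes ev: "even CARD('a)" and fk: "f \<in> ker_piP1" and fc: "f \<in> CPL1"
  shows "f = (\<Sum>b\<in>{b. f (pt (mk4 0 b 1 0)) = 1}. chi (lineM b))"
proof (rule ext)
  fix p
  let ?H = "{b::'a. f (pt (mk4 0 b 1 0)) = 1}"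
  show "f p = (\<Sum>b\<in>?H. chi (lineM b)) p"
    unfolding sum_apply
  proof (cases "p \<in> gq_points")
    case True
    thus "f p = (\<Sum>b\<in>?H. chi (lineM b) p)"
    proof (cases rule: point_cases)
      case 1
      thus ?thesis using fk by (simp add: ker_piP1_def chi_lineM_P1)
    next
      case 2
      have "(\<Sum>b\<in>?H. chi (lineM b) p) = of_nat (card ?H) * chi p0 p"
        using 2 by (simp add: chi_lineM_l0)
      thus ?thesis using CPL1_vanishes_on_l0[OF fc True 2] kernel_even_support[OF ev fk fc]
        by (simp add: of_nat_bit)
    next
      case (3 a b')
      have "f p = of_bool (b' \<in> ?H)"
        using 3 kernel_constant_on_lineM[OF fk fc, of a b' 0] by (subst bit_eq_of_bool) simp
      thus ?thesis using 3 by (simp add: chi_lineM_affine)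
    qed
  qed (simp add: CPL1_vanishes_off_points[OF fc] chi_nonpoint)
qed


subsection \<open>The sums chi (lineM b1) + chi (lineM b2) lie in ker(pi_P1) \<inter> C(P,L1)\<close>

definition pairM :: "'a::field \<Rightarrow> 'a \<Rightarrow> ('a^4) set \<Rightarrow> bit" where
  "pairM c b = chi (lineM c) + chi (lineM b)"

text \<open>The algebraic heart of the representation below: in characteristic 2 the two
  solutions alpha_i = (v2 - v3 b_i)/v4 give the same value of v3 alpha + v4 alpha^2/(b1 - b2).\<close>
lemma char2_parabola_identity:
  fixes v2 v3 v4 b1 b2 :: "'a::field"
  assumes char2: "(2::'a) = 0" and v4: "v4 \<noteq> 0" and ne: "b1 \<noteq> b2"
  defines "\<alpha>1 \<equiv> (v2 - v3*b1)/v4" and "\<alpha>2 \<equiv> (v2 - v3*b2)/v4"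
  shows "v3*\<alpha>1 + v4*(\<alpha>1*\<alpha>1/(b1 - b2)) = v3*\<alpha>2 + v4*(\<alpha>2*\<alpha>2/(b1 - b2))"
proof -
  have d: "b1 - b2 \<noteq> 0" using ne by simp
  have "v4*(\<alpha>1 + \<alpha>2) = (v2 - v3*b1) + (v2 - v3*b2)"
    using v4 unfolding \<alpha>1_def \<alpha>2_def by (simp add: distrib_left)
  hence "v3*(b1 - b2) + v4*(\<alpha>1 + \<alpha>2) = 2 * (v2 - v3*b2)" by (simp add: algebra_simps)
  hence sum0: "v3*(b1 - b2) + v4*(\<alpha>1 + \<alpha>2) = 0" using char2 by simp
  have difference: "(v3*A1 + v4*(A1*A1/\<delta>)) - (v3*A2 + v4*(A2*A2/\<delta>))
      = (A1 - A2) * (v3*\<delta> + v4*(A1 + A2)) / \<delta>" if "\<delta> \<noteq> 0" for A1 A2 \<delta> :: 'a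
    using that by (simp add: field_simps)
  show ?thesis using difference[OF d, of \<alpha>1 \<alpha>2] sum0 by simp
qed

lemma lineL_parabola_count:
  fixes v :: "'a::{field,finite}^4"
  shows "v$4 \<noteq> 0 \<Longrightarrow> (\<Sum>\<alpha>\<in>UNIV. of_bool (v \<in> lineL \<alpha> b (\<alpha>*\<alpha>/\<delta>)) :: bit)
           = of_bool (v$1 = v$3*((v$2 - v$3*b)/v$4) + v$4*(((v$2 - v$3*b)/v$4)*((v$2 - v$3*b)/v$4)/\<delta>))"
    and "v$4 = 0 \<Longrightarrow> v$3 \<noteq> 0 \<Longrightarrow>
           (\<Sum>\<alpha>\<in>UNIV. of_bool (v \<in> lineL \<alpha> b (\<alpha>*\<alpha>/\<delta>)) :: bit) = of_bool (v$2 = b * v$3)"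
    and "v$4 = 0 \<Longrightarrow> v$3 = 0 \<Longrightarrow> v \<noteq> 0 \<Longrightarrow>
           (\<Sum>\<alpha>\<in>UNIV. of_bool (v \<in> lineL \<alpha> b (\<alpha>*\<alpha>/\<delta>)) :: bit) = 0"
proof -
  assume v4: "v$4 \<noteq> 0"
  have solve: "v$2 = v$3*b + v$4*\<alpha> \<longleftrightarrow> \<alpha> = (v$2 - v$3*b)/v$4" for \<alpha>
    using v4 by (auto simp: field_simps)
  show "(\<Sum>\<alpha>\<in>UNIV. of_bool (v \<in> lineL \<alpha> b (\<alpha>*\<alpha>/\<delta>)) :: bit)
      = of_bool (v$1 = v$3*((v$2 - v$3*b)/v$4) + v$4*(((v$2 - v$3*b)/v$4)*((v$2 - v$3*b)/v$4)/\<delta>))"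
    by (rule sum_of_bool_unique) (simp only: mem_lineL solve, blast)
next
  assume v4: "v$4 = 0" and v3: "v$3 \<noteq> 0"
  have solve: "v$1 = v$3*\<alpha> + v$4*x \<longleftrightarrow> \<alpha> = v$1/v$3" for \<alpha> x
    using v3 v4 by (auto simp: field_simps)
  have "v \<in> lineL \<alpha> b x \<longleftrightarrow> \<alpha> = v$1/v$3 \<and> v$2 = b * v$3" for \<alpha> x
    unfolding mem_lineL solve using v4 by (simp add: mult.commute)
  thus "(\<Sum>\<alpha>\<in>UNIV. of_bool (v \<in> lineL \<alpha> b (\<alpha>*\<alpha>/\<delta>)) :: bit) = of_bool (v$2 = b * v$3)"
    by (intro sum_of_bool_unique)
next
  assume "v$4 = 0" "v$3 = 0" "v \<noteq> 0"
  hence "v \<notin> lineL \<alpha> b x" for \<alpha> x by (auto simp: mem_lineL vec4_eq_iff)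
  thus "(\<Sum>\<alpha>\<in>UNIV. of_bool (v \<in> lineL \<alpha> b (\<alpha>*\<alpha>/\<delta>)) :: bit) = 0" by simp
qed

lemma pairM_as_L1_sum:
  fixes b1 b2 :: "'a::{field,finite}"
  assumes char2: "(2::'a) = 0" and ne: "b1 \<noteq> b2"
  shows "pairM b1 b2 = (\<Sum>\<alpha>\<in>UNIV. chi (lineL \<alpha> b1 (\<alpha>*\<alpha>/(b1 - b2))))
                        + (\<Sum>\<alpha>\<in>UNIV. chi (lineL \<alpha> b2 (\<alpha>*\<alpha>/(b1 - b2))))"
proof (rule ext)
  fix p
  show "pairM b1 b2 p = ((\<Sum>\<alpha>\<in>UNIV. chi (lineL \<alpha> b1 (\<alpha>*\<alpha>/(b1 - b2))))
                        + (\<Sum>\<alpha>\<in>UNIV. chi (lineL \<alpha> b2 (\<alpha>*\<alpha>/(b1 - b2))))) p"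
  proof (cases "p \<in> gq_points")
    case True
    then obtain v where v: "v \<noteq> 0" "p = pt v" by (metis point_pt)
    have "(\<Sum>\<alpha>\<in>UNIV. of_bool (v \<in> lineL \<alpha> b1 (\<alpha>*\<alpha>/(b1 - b2))) :: bit)
          + (\<Sum>\<alpha>\<in>UNIV. of_bool (v \<in> lineL \<alpha> b2 (\<alpha>*\<alpha>/(b1 - b2))))
        = of_bool (v \<in> lineM b1) + of_bool (v \<in> lineM b2)"
    proof (cases "v$4 = 0")
      case False
      show ?thesis unfolding lineL_parabola_count(1)[OF False] char2_parabola_identity[OF char2 False ne]
        using False by (simp add: mem_lineM)
    next
      case v4: True
      show ?thesis
      proof (cases "v$3 = 0")
        case True
        show ?thesis unfolding lineL_parabola_count(3)[OF v4 True v(1)] using True by (simp add: mem_lineM)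
      next
        case False
        show ?thesis unfolding lineL_parabola_count(2)[OF v4 False] using v4 by (simp add: mem_lineM)
      qed
    qed
    thus ?thesis using v by (simp add: pairM_def sum_apply chi_pt)
  qed (simp add: pairM_def sum_apply chi_nonpoint)
qed

lemma kernel_subspace: "F2fun.subspace ker_piP1"
  unfolding ker_piP1_def by (rule F2fun.subspaceI) (auto simp: fscale_def)

lemma pairM_in_kernel_CPL1:
  fixes b1 b2 :: "'a::{field,finite}"
  assumes "(2::'a) = 0" "b1 \<noteq> b2"
  shows "pairM b1 b2 \<in> ker_piP1 \<inter> CPL1"
proof
  show "pairM b1 b2 \<in> ker_piP1" by (simp add: ker_piP1_def pairM_def chi_lineM_P1)
  show "pairM b1 b2 \<in> CPL1" unfolding pairM_as_L1_sum[OF assms] CPL1_def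
    by (intro F2fun.span_add F2fun.span_sum F2fun.span_base imageI lineL_in_L1)
qed


subsection \<open>The basis\<close>

text \<open>The functions pairM c b, b \<noteq> c, are independent: pairM c b is the only one that is
  nonzero at the point (0:b:1:0).\<close>
lemma pairM_independent: "F2fun.independent (pairM c ` (UNIV - {c}))"
proof (rule independent_by_evaluation[where w = "\<lambda>b. pt (mk4 0 b 1 0)"])
  fix b b' assume "b \<in> UNIV - {c}" "b' \<in> UNIV - {c}"
  thus "pairM c b' (pt (mk4 0 b 1 0)) = of_bool (b = b')"
    by (simp add: pairM_def chi_lineM_affine)
qed

text \<open>They span ker(pi_P1) \<inter> C(P,L1): an even sum of chi (lineM b) regroups into pairs.\<close>
lemma pairM_span:
  fixes c :: "'a::{field,finite}"
  assumes char2: "(2::'a) = 0" and ev: "even CARD('a)"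
  shows "F2fun.span (pairM c ` (UNIV - {c})) = ker_piP1 \<inter> CPL1"
proof
  have "pairM c ` (UNIV - {c}) \<subseteq> ker_piP1 \<inter> CPL1"
    by (rule image_subsetI, rule pairM_in_kernel_CPL1[OF char2]) auto
  moreover have "F2fun.subspace (ker_piP1 \<inter> CPL1)"
    by (simp add: F2fun.subspace_inter kernel_subspace CPL1_def F2fun.subspace_span)
  ultimately show "F2fun.span (pairM c ` (UNIV - {c})) \<subseteq> ker_piP1 \<inter> CPL1"
    by (rule F2fun.span_minimal)
  show "ker_piP1 \<inter> CPL1 \<subseteq> F2fun.span (pairM c ` (UNIV - {c}))"
  proof
    fix f :: "('a^4) set \<Rightarrow> bit" assume "f \<in> ker_piP1 \<inter> CPL1"
    hence fk: "f \<in> ker_piP1" and fc: "f \<in> CPL1" by simp_all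
    let ?H = "{b. f (pt (mk4 0 b 1 0)) = 1}"
    have "f = (\<Sum>b\<in>?H. chi (lineM b))" by (rule kernel_decomposition[OF ev fk fc])
    also have "\<dots> = (\<Sum>b\<in>?H - {c}. pairM c b)" unfolding pairM_def
      by (rule even_sum_as_pairs) (simp_all add: kernel_even_support[OF ev fk fc])
    also have "\<dots> \<in> F2fun.span (pairM c ` (UNIV - {c}))"
      by (intro F2fun.span_sum F2fun.span_base) auto
    finally show "f \<in> F2fun.span (pairM c ` (UNIV - {c}))" .
  qed
qed


theorem lemma13:
  fixes t :: nat and l :: "('a::{field,finite} ^ 4) set"
  assumes "CARD('a) = 2 ^ t"
    and "l \<in> gq_lines" and "p0 \<subseteq> l" and "l \<noteq> l0"
  shows "F2fun.dim (ker_piP1 \<inter> (CPL1 :: (('a ^ 4) set \<Rightarrow> bit) set)) = 2 ^ t - 1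
    \<and> inj_on (\<lambda>l'. chi l - chi l') {l' \<in> gq_lines. p0 \<subseteq> l' \<and> l' \<noteq> l0 \<and> l' \<noteq> l}
    \<and> F2fun.independent ((\<lambda>l'. chi l - chi l') ` {l' \<in> gq_lines. p0 \<subseteq> l' \<and> l' \<noteq> l0 \<and> l' \<noteq> l})
    \<and> F2fun.span ((\<lambda>l'. chi l - chi l') ` {l' \<in> gq_lines. p0 \<subseteq> l' \<and> l' \<noteq> l0 \<and> l' \<noteq> l})
        = ker_piP1 \<inter> CPL1"
proof -
  obtain c where l: "l = lineM c" using lines_through_p0[OF assms(2-4)] .
  let ?B = "{l' \<in> gq_lines. p0 \<subseteq> l' \<and> l' \<noteq> l0 \<and> l' \<noteq> l}"
  let ?G = "(\<lambda>l'. chi l - chi l') ` ?B"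
  have B: "?B = lineM ` (UNIV - {c})" unfolding l by (rule other_lines_through_p0)
  have G: "?G = pairM c ` (UNIV - {c})"
    unfolding B image_image by (simp add: l pairM_def fun_minus_bit)
  have inj: "inj_on (\<lambda>l'. chi l - chi l') ?B" by (rule chi_diff_inj_on) (simp add: gq_lines_def)
  have indep: "F2fun.independent ?G" unfolding G by (rule pairM_independent)
  have span: "F2fun.span ?G = ker_piP1 \<inter> CPL1"
    unfolding G using field_card_power_of_two[OF assms(1)] by (intro pairM_span)
  have "card ?G = card ?B" using inj by (rule card_image)
  also have "\<dots> = CARD('a) - 1" unfolding B
    by (simp add: card_image inj_on_def lineM_eq_iff card_Diff_singleton)
  finally have "F2fun.dim (ker_piP1 \<inter> (CPL1 :: (('a ^ 4) set \<Rightarrow> bit) set)) = 2 ^ t - 1"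
    using F2fun.dim_span_eq_card_independent[OF indep] span assms(1) by simp
  thus ?thesis using inj indep span by simp
qed

end
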